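(* Let $O^4$ be the set of odd-parity 4-bit strings, let $u=u_1u_2u_3u_4\in O^4$ and let $u'$ be its bitwise complement ($u\oplus u'=1111$). Let $n\ge1$ and let four parties (the first being Alice) hold $X_j=(x^j_1,\dots,x^j_n)\in\{0,1\}^n$, $j=1,\dots,4$, under the promise that $x_i^1x_i^2x_i^3x_i^4\in A$ for all $i$, where $A\subseteq O^4\setminus\{u'\}$ is any fixed set. Let $f_u(X_1,X_2,X_3,X_4)=\bigoplus_{i=1}^n t_u(x_i^1x_i^2x_i^3x_i^4)$ with $t_u(w)=1$ if $w=u$ and $0$ otherwise. Suppose the parties share $n$ copies of $|\psi_4\rangle=2^{-3/2}\big(\sum_{v\in\{0,1\}^4,\,|v|=1}|v\rangle-\sum_{v\in\{0,1\}^4,\,|v|=3}|v\rangle\big)$ (where $|v|$ is the Hamming weight), the $j$-th qubit of each copy held by party $j$. Then there is a protocol in which, for each $i$, party $j$ applies the Hadamard gate $H$ to its qubit of the $i$-th copy if $x_i^j\ne u_j$ and the identity otherwise, measures in the computational basis, performs local classical computation, and parties $2,3,4$ each send one classical bit to Alice (three classical bits in total), after which Alice outputs $f_u(X_1,X_2,X_3,X_4)$ correctly for every input satisfying the promise.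
   Context: $H$ is the Hadamard gate $H|0\rangle=(|0\rangle+|1\rangle)/\sqrt2$, $H|1\rangle=(|0\rangle-|1\rangle)/\sqrt2$. Communication consists only of classical bits sent to Alice; no quantum communication is allowed. *)

theory Defs
  imports Complex_Main
begin

text \<open>Bits are booleans (True = 1); bit strings are bool lists.
  Parties are indexed 0,1,2,3 (party 0 is Alice); copies/positions by 0..n-1.\<close>

definition bitstrings :: "nat \<Rightarrow> bool list set" where
  "bitstrings k = {v. length v = k}"

definition hw :: "bool list \<Rightarrow> nat" where
  "hw v = length (filter id v)"

definition O4 :: "bool list set" where
  "O4 = {v \<in> bitstrings 4. odd (hw v)}"

definition bcompl :: "bool list \<Rightarrow> bool list" where
  "bcompl v = map Not v"

definition t_fun :: "bool list \<Rightarrow> bool list \<Rightarrow> bool" where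
  "t_fun u w = (w = u)"

definition word_at :: "(nat \<Rightarrow> bool list) \<Rightarrow> nat \<Rightarrow> bool list" where
  "word_at X i = map (\<lambda>j. X j ! i) [0..<4]"

definition f_u :: "bool list \<Rightarrow> nat \<Rightarrow> (nat \<Rightarrow> bool list) \<Rightarrow> bool" where
  "f_u u n X = odd (card {i. i < n \<and> t_fun u (word_at X i)})"

definition psi4 :: "bool list \<Rightarrow> real" where
  "psi4 v = 2 powr (-3/2) *
     (if length v = 4 \<and> hw v = 1 then 1 else if length v = 4 \<and> hw v = 3 then -1 else 0)"

text \<open>Matrix entries <b|H|v> of the Hadamard gate and <b|G|v> for G = H (s) or identity (not s).\<close>
definition hadamard :: "bool \<Rightarrow> bool \<Rightarrow> real" where
  "hadamard b v = (if b \<and> v then -1 else 1) / sqrt 2"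

definition gate :: "bool \<Rightarrow> bool \<Rightarrow> bool \<Rightarrow> real" where
  "gate s b v = (if s then hadamard b v else (if b = v then 1 else 0))"

text \<open>Amplitude <b| (G_{s_1} x G_{s_2} x G_{s_3} x G_{s_4}) |psi_4> and the Born probability
  of measuring outcome b on one copy.\<close>
definition copy_amp :: "bool list \<Rightarrow> bool list \<Rightarrow> real" where
  "copy_amp s b = (\<Sum>v\<in>bitstrings 4. (\<Prod>j<4. gate (s ! j) (b ! j) (v ! j)) * psi4 v)"

definition copy_prob :: "bool list \<Rightarrow> bool list \<Rightarrow> real" where
  "copy_prob s b = (copy_amp s b)\<^sup>2"

definition hsel :: "bool list \<Rightarrow> (nat \<Rightarrow> bool list) \<Rightarrow> nat \<Rightarrow> bool list" where
  "hsel u X i = map (\<lambda>j. X j ! i \<noteq> u ! j) [0..<4]"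

text \<open>Probability that the joint measurement outcomes are B (B j = outcomes of party j,
  one bit per copy) on the product state psi_4^{(x) n}.\<close>
definition outcome_prob :: "bool list \<Rightarrow> nat \<Rightarrow> (nat \<Rightarrow> bool list) \<Rightarrow> (nat \<Rightarrow> bool list) \<Rightarrow> real" where
  "outcome_prob u n X B = (\<Prod>i<n. copy_prob (hsel u X i) (word_at B i))"

end

theory Submission imports Defs begin

text \<open>Since \<open>u\<close> and the word \<open>w\<close> of copy \<open>i\<close> both have odd weight, the Hadamard pattern
  \<open>w \<oplus> u\<close> has even weight, and it is not \<open>1111\<close> because \<open>w \<noteq> u'\<close>. So either no qubit or exactly
  two qubits of the copy are rotated. The state \<open>\<psi>\<^sub>4\<close> is supported on odd-weight strings, so in
  the first case (\<open>w = u\<close>) every possible outcome has odd weight; in the second case the signs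
  of \<open>\<psi>\<^sub>4\<close> make all odd-weight amplitudes cancel, so every possible outcome has even weight.
  Hence the parity of the four outcome bits of copy \<open>i\<close> is \<open>t\<^sub>u(w)\<close>, and \<open>f\<^sub>u\<close> is the parity of
  all \<open>4n\<close> outcome bits: each party sends the parity of its own outcomes, and Alice adds them up.\<close>

lemma bitstrings_0: "bitstrings 0 = {[]}"
  by (auto simp: bitstrings_def)

lemma bitstrings_Suc: "bitstrings (Suc k) = Cons False ` bitstrings k \<union> Cons True ` bitstrings k"
  unfolding bitstrings_def
proof (intro set_eqI iffI)
  fix v :: "bool list"
  assume "v \<in> {v. length v = Suc k}"
  then show "v \<in> Cons False ` {v. length v = k} \<union> Cons True ` {v. length v = k}"
    by (cases v) auto
qed auto

lemma finite_bitstrings: "finite (bitstrings k)"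
  using finite_lists_length_eq[of "UNIV :: bool set" k] by (simp add: bitstrings_def)

lemma sum_bitstrings_Suc:
  "(\<Sum>v\<in>bitstrings (Suc k). g v) = (\<Sum>v\<in>bitstrings k. g (False # v)) + (\<Sum>v\<in>bitstrings k. g (True # v))"
  unfolding bitstrings_Suc
  by (subst sum.union_disjoint) (auto simp: finite_bitstrings sum.reindex)

lemma length_4_cases:
  assumes "length v = 4"
  obtains a b c d where "v = [a, b, c, d]"
  using assms by (cases v; cases "tl v"; cases "tl (tl v)"; cases "tl (tl (tl v))") auto

lemma hw_Nil [simp]: "hw [] = 0"
  by (simp add: hw_def)

lemma hw_Cons [simp]: "hw (x # v) = of_bool x + hw v"
  by (simp add: hw_def)

lemma hw_le_length: "hw v \<le> length v"
  by (simp add: hw_def)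

lemma hw_conv_sum: "hw v = (\<Sum>i<length v. of_bool (v ! i))"
  by (simp add: hw_def length_filter_conv_card Int_def)

lemma even_hw_map2_xor:
  "length v = length w \<Longrightarrow> even (hw (map2 (\<noteq>) v w)) \<longleftrightarrow> (even (hw v) \<longleftrightarrow> even (hw w))"
  by (induction v w rule: list_induct2) auto

lemma hw_map2_xor_eq_0_iff: "length v = length w \<Longrightarrow> hw (map2 (\<noteq>) v w) = 0 \<longleftrightarrow> v = w"
  by (induction v w rule: list_induct2) auto

lemma hw_map2_xor_eq_length_iff:
  "length v = length w \<Longrightarrow> hw (map2 (\<noteq>) v w) = length v \<longleftrightarrow> v = bcompl w"
proof (induction v w rule: list_induct2)
  case (Cons x v y w)
  have "hw (map2 (\<noteq>) v w) \<noteq> Suc (length v)"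
    using hw_le_length[of "map2 (\<noteq>) v w"] Cons.hyps by simp
  then show ?case
    using Cons by (auto simp: bcompl_def)
qed (simp add: bcompl_def)

lemma copy_amp_nonzero_parity:
  assumes "length s = 4" "length b = 4" "even (hw s)" "hw s \<noteq> 4" "copy_amp s b \<noteq> 0"
  shows "odd (hw b) \<longleftrightarrow> hw s = 0"
proof -
  obtain s0 s1 s2 s3 where s: "s = [s0, s1, s2, s3]" using assms(1) by (rule length_4_cases)
  obtain b0 b1 b2 b3 where b: "b = [b0, b1, b2, b3]" using assms(2) by (rule length_4_cases)
  have "bitstrings 4 = bitstrings (Suc (Suc (Suc (Suc 0))))"
    by (simp add: numeral_eq_Suc)
  then have amp: "copy_amp s b =
      (\<Sum>v\<in>bitstrings (Suc (Suc (Suc (Suc 0)))). (\<Prod>j<4. gate (s ! j) (b ! j) (v ! j)) * psi4 v)"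
    by (simp add: copy_amp_def)
  show ?thesis
    using assms(3-5) unfolding amp unfolding sum_bitstrings_Suc bitstrings_0 s b
    by (simp add: lessThan_nat_numeral psi4_def gate_def)
      (cases s0; cases s1; cases s2; cases s3; cases b0; cases b1; cases b2; cases b3;
        simp add: hadamard_def)
qed

lemma hsel_eq_map2_xor: "length u = 4 \<Longrightarrow> hsel u X i = map2 (\<noteq>) (word_at X i) u"
  by (simp add: hsel_def word_at_def list_eq_iff_nth_eq)

lemma copy_outcome_parity:
  assumes "u \<in> O4" "w \<in> O4" "w \<noteq> bcompl u" "length b = 4"
    and "copy_amp (map2 (\<noteq>) w u) b \<noteq> 0"
  shows "odd (hw b) \<longleftrightarrow> w = u"
proof -
  have len: "length w = length u" "length u = 4"
    using assms(1,2) by (simp_all add: O4_def bitstrings_def)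
  have "even (hw (map2 (\<noteq>) w u))"
    unfolding even_hw_map2_xor[OF len(1)] using assms(1,2) by (simp add: O4_def)
  moreover have "hw (map2 (\<noteq>) w u) \<noteq> 4"
    using assms(3) len hw_map2_xor_eq_length_iff by fastforce
  ultimately have "odd (hw b) \<longleftrightarrow> hw (map2 (\<noteq>) w u) = 0"
    using assms(4,5) len by (intro copy_amp_nonzero_parity) auto
  then show ?thesis
    unfolding hw_map2_xor_eq_0_iff[OF len(1)] .
qed

lemma copy_amp_nonzero_if_outcome_prob_pos:
  assumes "outcome_prob u n X B > 0" "i < n"
  shows "copy_amp (hsel u X i) (word_at B i) \<noteq> 0"
proof
  assume "copy_amp (hsel u X i) (word_at B i) = 0"
  then have "outcome_prob u n X B = 0"
    unfolding outcome_prob_def copy_prob_def using assms(2) by (auto intro!: prod_zero)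
  with assms(1) show False by simp
qed

lemma sum_hw_eq_sum_hw_word_at:
  assumes "\<forall>j<4. length (B j) = n"
  shows "(\<Sum>j<4. hw (B j)) = (\<Sum>i<n. hw (word_at B i))"
proof -
  have "(\<Sum>j<4. hw (B j)) = (\<Sum>j<4. \<Sum>i<n. of_bool (B j ! i))"
    using assms by (simp add: hw_conv_sum)
  also have "\<dots> = (\<Sum>i<n. \<Sum>j<4. of_bool (B j ! i))"
    by (rule sum.swap)
  also have "\<dots> = (\<Sum>i<n. hw (word_at B i))"
    by (simp add: hw_conv_sum word_at_def)
  finally show ?thesis .
qed

lemma f_u_eq_odd_sum_hw:
  assumes "u \<in> O4" "A \<subseteq> O4 - {bcompl u}"
    and "\<forall>j<4. length (B j) = n" "\<forall>i<n. word_at X i \<in> A" "outcome_prob u n X B > 0"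
  shows "f_u u n X \<longleftrightarrow> odd (\<Sum>j<4. hw (B j))"
proof -
  have "odd (hw (word_at B i)) \<longleftrightarrow> word_at X i = u" if "i < n" for i
  proof (rule copy_outcome_parity[OF assms(1)])
    show "word_at X i \<in> O4" "word_at X i \<noteq> bcompl u"
      using assms(2,4) that by auto
    show "length (word_at B i) = 4"
      by (simp add: word_at_def)
    show "copy_amp (map2 (\<noteq>) (word_at X i) u) (word_at B i) \<noteq> 0"
      using copy_amp_nonzero_if_outcome_prob_pos[OF assms(5) that] assms(1)
      by (simp add: hsel_eq_map2_xor O4_def bitstrings_def)
  qed
  then have "{i \<in> {..<n}. odd (hw (word_at B i))} = {i. i < n \<and> t_fun u (word_at X i)}"
    by (auto simp: t_fun_def)
  then show ?thesis
    by (simp add: f_u_def sum_hw_eq_sum_hw_word_at[OF assms(3)] even_sum_iff)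
qed

theorem theorem4:
  fixes u :: "bool list" and A :: "bool list set" and n :: nat
  assumes "u \<in> O4"
    and "A \<subseteq> O4 - {bcompl u}"
    and "n \<ge> 1"
  shows "\<exists>(msg :: nat \<Rightarrow> bool list \<Rightarrow> bool list \<Rightarrow> bool)
            (alice :: bool list \<Rightarrow> bool list \<Rightarrow> bool \<Rightarrow> bool \<Rightarrow> bool \<Rightarrow> bool).
          \<forall>X B. (\<forall>j<4. length (X j) = n) \<longrightarrow> (\<forall>j<4. length (B j) = n) \<longrightarrow>
            (\<forall>i<n. word_at X i \<in> A) \<longrightarrow> outcome_prob u n X B > 0 \<longrightarrow>
            alice (X 0) (B 0) (msg 1 (X 1) (B 1)) (msg 2 (X 2) (B 2)) (msg 3 (X 3) (B 3))
              = f_u u n X"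
proof (intro exI allI impI)
  fix X B
  assume "\<forall>j<4. length (B j) = n" "\<forall>i<n. word_at X i \<in> A" "outcome_prob u n X B > 0"
  then have "f_u u n X \<longleftrightarrow> odd (\<Sum>j<4. hw (B j))"
    by (rule f_u_eq_odd_sum_hw[OF assms(1,2)])
  then show "(\<lambda>_ b m\<^sub>1 m\<^sub>2 m\<^sub>3. odd (hw b) \<noteq> (m\<^sub>1 \<noteq> (m\<^sub>2 \<noteq> m\<^sub>3))) (X 0) (B 0)
      ((\<lambda>_ _ b. odd (hw b)) 1 (X 1) (B 1)) ((\<lambda>_ _ b. odd (hw b)) 2 (X 2) (B 2))
      ((\<lambda>_ _ b. odd (hw b)) 3 (X 3) (B 3)) = f_u u n X"
    by (auto simp: lessThan_nat_numeral)
qed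

end
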